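(* Let $n\geq1$ and $\Delta:=\rho_n^{n+1}\in M_n$. Then: (1) $\rho_1(\rho_n\rho_1)^{n-1}=\rho_n^{\,n}$, and hence $\Delta=(\rho_1\rho_n)^n=(\rho_n\rho_1)^n$. (2) For $1\leq i\leq n$, setting $a_i:=\rho_n^{\,i}(\rho_1\rho_n)^{n-i}$, one has $\rho_ia_i=a_i\rho_i=\Delta$; in particular each generator $\rho_i$ is both a left- and a right-divisor of $\Delta$, and $\Delta$ is central in $M_n$. (3) For all $a,b\in M_n$, if $ab=\Delta$ then $ba=\Delta$.
   Context: $M_n$ denotes the monoid with generators $\rho_1,\dots,\rho_n$ and relations $\rho_1\rho_n\rho_i=\rho_{i+1}\rho_n$ for $1\leq i\leq n-1$. *)

theory Defs
  imports Main
begin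

text \<open>The monoid M_n is presented by generators rho_1,...,rho_n (encoded as the
natural numbers 1..n) and relations rho_1 rho_n rho_i = rho_(i+1) rho_n for 1 <= i <= n-1.
Elements of M_n are represented by words (lists over {1..n}) modulo the congruence
generated by the relations.\<close>

definition words :: "nat \<Rightarrow> nat list set" where
  "words n = lists {1..n}"

inductive Mrel :: "nat \<Rightarrow> nat list \<Rightarrow> nat list \<Rightarrow> bool" for n where
  rel: "1 \<le> i \<Longrightarrow> i \<le> n - 1 \<Longrightarrow> Mrel n [1, n, i] [Suc i, n]"

inductive Meq :: "nat \<Rightarrow> nat list \<Rightarrow> nat list \<Rightarrow> bool" for n where
  refl: "Meq n u u"
| sym: "Meq n u v \<Longrightarrow> Meq n v u"
| trans: "Meq n u v \<Longrightarrow> Meq n v w \<Longrightarrow> Meq n u w"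
| step: "Mrel n l r \<Longrightarrow> Meq n (u @ l @ w) (u @ r @ w)"

definition wpow :: "nat list \<Rightarrow> nat \<Rightarrow> nat list" where
  "wpow w k = concat (replicate k w)"

definition Delta :: "nat \<Rightarrow> nat list" where
  "Delta n = wpow [n] (n + 1)"

definition a_word :: "nat \<Rightarrow> nat \<Rightarrow> nat list" where
  "a_word n i = wpow [n] i @ wpow [1, n] (n - i)"

end

theory Submission
  imports Defs
begin

text \<open>Parts (1) and (2) are word computations driven by the identity
  \<open>(\<rho>\<^sub>1\<rho>\<^sub>n)\<^sup>k \<rho>\<^sub>j = \<rho>\<^sub>j\<^sub>+\<^sub>k \<rho>\<^sub>n\<^sup>k\<close>, which follows from the defining relations by induction on \<open>k\<close>;
  centrality of \<open>\<Delta>\<close> follows from \<open>\<rho>\<^sub>i a\<^sub>i = \<Delta> = a\<^sub>i \<rho>\<^sub>i\<close>.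

  For (3), \<open>\<rho>\<^sub>c \<mapsto> x\<^sup>c y\<^sup>-\<^sup>c\<close> defines a homomorphism from \<open>M\<^sub>n\<close> to the free product
  \<open>\<langle>x, y | x\<^sup>n, y\<^sup>n\<^sup>+\<^sup>1\<rangle>\<close> sending \<open>\<Delta>\<close> to \<open>1\<close>; in a group \<open>ab = 1\<close> implies \<open>ba = 1\<close>. Conversely, every
  word with trivial image is equal in \<open>M\<^sub>n\<close> to a power \<open>\<Delta>\<^sup>m\<close>: removing (central) factors \<open>\<Delta>\<close> and
  rewriting factors \<open>\<rho>\<^sub>i \<rho>\<^sub>n\<^sup>i \<rho>\<^sub>j\<close> with \<open>i, j < n\<close> into words with fewer letters \<open>\<noteq> \<rho>\<^sub>n\<close>
  terminates in a word avoiding both patterns, and the normal form of the image of such a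
  word is visibly nontrivial unless the word is empty. The sum of the letter indices is
  invariant under the relations, which forces \<open>m = 1\<close> when \<open>ab = \<Delta>\<close>.\<close>

section \<open>Identities in \<open>M\<^sub>n\<close>\<close>

lemma Meq_context: "Meq n u v \<Longrightarrow> Meq n (p @ u @ q) (p @ v @ q)"
proof (induction rule: Meq.induct)
  case (step l r u w)
  show ?case
    using Meq.step[OF step, of "p @ u" "w @ q"] by simp
next
  case (sym u v)
  show ?case
    using sym.IH by (rule Meq.sym)
next
  case (trans u v w)
  show ?case
    using trans.IH by (rule Meq.trans)
qed (rule Meq.refl)

lemma Meq_append_left: "Meq n v v' \<Longrightarrow> Meq n (u @ v) (u @ v')"
  using Meq_context[of n v v' u "[]"] by simp

lemma Meq_append_right: "Meq n u u' \<Longrightarrow> Meq n (u @ v) (u' @ v)"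
  using Meq_context[of n u u' "[]" v] by simp

lemma Meq_relation: "1 \<le> i \<Longrightarrow> i < n \<Longrightarrow> Meq n ([1, n, i] @ w) ([Suc i, n] @ w)"
  using Meq.step[OF Mrel.rel, of i n "[]" w] by simp

declare Meq.refl [simp] Meq.trans [trans]

lemma wpow_0 [simp]: "wpow w 0 = []"
  by (simp add: wpow_def)

lemma wpow_Suc: "wpow w (Suc k) = w @ wpow w k"
  by (simp add: wpow_def)

lemma wpow_Suc_right: "wpow w (Suc k) = wpow w k @ w"
  by (simp add: wpow_def replicate_append_same[symmetric])

lemma wpow_add: "wpow w (k + l) = wpow w k @ wpow w l"
  by (simp add: wpow_def replicate_add)

lemma wpow_singleton: "wpow [c] k = replicate k c"
  by (induction k) (simp_all add: wpow_Suc)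

lemma Delta_eq_replicate: "Delta n = replicate (Suc n) n"
  by (simp add: Delta_def wpow_singleton)

lemma Delta_eq_Cons: "Delta n = [n] @ wpow [n] n"
  by (simp add: Delta_def wpow_Suc)

lemma Meq_wpow_1n_shift:
  "1 \<le> j \<Longrightarrow> j + k \<le> n \<Longrightarrow> Meq n (wpow [1, n] k @ [j]) ([j + k] @ wpow [n] k)"
proof (induction k)
  case (Suc k)
  have "wpow [1, n] (Suc k) @ [j] = [1, n] @ (wpow [1, n] k @ [j])"
    by (simp add: wpow_Suc)
  also have "Meq n \<dots> ([1, n, j + k] @ wpow [n] k)"
    using Meq_append_left[OF Suc.IH, of "[1, n]"] Suc.prems by simp
  also have "Meq n \<dots> ([Suc (j + k), n] @ wpow [n] k)"
    using Suc.prems by (intro Meq_relation) auto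
  finally show ?case
    by (simp add: wpow_Suc)
qed simp

lemma Meq_letter_wpow_n:
  assumes "1 \<le> i" "i \<le> n"
  shows "Meq n ([i] @ wpow [n] i) (wpow [1, n] i)"
proof -
  obtain k where i: "i = Suc k"
    using assms(1) by (cases i) auto
  have "[i] @ wpow [n] i = ([1 + k] @ wpow [n] k) @ [n]"
    by (simp add: i wpow_Suc_right)
  also have "Meq n \<dots> ((wpow [1, n] k @ [1]) @ [n])"
  proof (rule Meq_append_right, rule Meq.sym)
    show "Meq n (wpow [1, n] k @ [1]) ([1 + k] @ wpow [n] k)"
      using assms i by (intro Meq_wpow_1n_shift) simp_all
  qed
  finally show ?thesis
    by (simp add: i wpow_Suc_right)
qed

lemma Meq_rho1_wpow_n1:
  assumes "1 \<le> n"
  shows "Meq n ([1] @ wpow [n, 1] (n - 1)) (wpow [n] n)"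
proof -
  obtain m where n: "n = Suc m"
    using assms by (cases n) auto
  have "[1] @ wpow [n, 1] m = wpow [1, n] m @ [1]"
    by (induction m) (simp_all add: wpow_Suc wpow_Suc_right)
  also have "Meq n \<dots> ([1 + m] @ wpow [n] m)"
    using n by (intro Meq_wpow_1n_shift) simp_all
  finally show ?thesis
    by (simp add: n wpow_Suc)
qed

lemma Meq_Delta_wpow_1n: "1 \<le> n \<Longrightarrow> Meq n (Delta n) (wpow [1, n] n)"
  using Meq_letter_wpow_n[of n n] by (simp add: Delta_eq_Cons)

lemma Meq_Delta_wpow_n1:
  assumes "1 \<le> n"
  shows "Meq n (Delta n) (wpow [n, 1] n)"
proof -
  have "Meq n ([n] @ wpow [n] n) ([n] @ [1] @ wpow [n, 1] (n - 1))"
    using Meq_append_left[OF Meq.sym[OF Meq_rho1_wpow_n1[OF assms]], of "[n]"] by simp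
  moreover have "wpow [n, 1] n = [n, 1] @ wpow [n, 1] (n - 1)"
    using assms by (cases n) (simp_all add: wpow_Suc)
  ultimately show ?thesis
    by (simp add: Delta_eq_Cons)
qed

lemma Meq_letter_a_word:
  assumes "1 \<le> i" "i \<le> n"
  shows "Meq n ([i] @ a_word n i) (Delta n)"
proof -
  have "[i] @ a_word n i = ([i] @ wpow [n] i) @ wpow [1, n] (n - i)"
    by (simp add: a_word_def)
  also have "Meq n \<dots> (wpow [1, n] i @ wpow [1, n] (n - i))"
    using Meq_append_right[OF Meq_letter_wpow_n[OF assms]] .
  also have "\<dots> = wpow [1, n] n"
    using assms by (simp flip: wpow_add)
  also have "Meq n \<dots> (Delta n)"
    using Meq.sym[OF Meq_Delta_wpow_1n] assms by simp
  finally show ?thesis .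
qed

lemma Meq_a_word_letter:
  assumes "1 \<le> i" "i \<le> n"
  shows "Meq n (a_word n i @ [i]) (Delta n)"
proof -
  have "a_word n i @ [i] = wpow [n] i @ (wpow [1, n] (n - i) @ [i])"
    by (simp add: a_word_def)
  also have "Meq n \<dots> (wpow [n] i @ ([n] @ wpow [n] (n - i)))"
    using Meq_append_left[OF Meq_wpow_1n_shift[of i "n - i" n]] assms by simp
  also have "\<dots> = replicate (Suc i + (n - i)) n"
    by (simp add: wpow_singleton replicate_app_Cons_same flip: replicate_add)
  also have "\<dots> = Delta n"
    using assms by (simp add: Delta_eq_replicate)
  finally show ?thesis .
qed

lemma a_word_in_words: "1 \<le> n \<Longrightarrow> a_word n i \<in> words n"
  by (auto simp: a_word_def words_def wpow_def split: if_splits)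

lemma Meq_Delta_central: "w \<in> words n \<Longrightarrow> Meq n (Delta n @ w) (w @ Delta n)"
proof (induction w)
  case (Cons c w)
  then have c: "1 \<le> c" "c \<le> n" and w: "w \<in> words n"
    by (auto simp: words_def)
  have "Delta n @ c # w = (Delta n @ [c]) @ w"
    by simp
  also have "Meq n \<dots> (([c] @ a_word n c) @ [c] @ w)"
    using Meq_append_right[OF Meq.sym[OF Meq_letter_a_word[OF c]]] by simp
  also have "\<dots> = [c] @ (a_word n c @ [c]) @ w"
    by simp
  also have "Meq n \<dots> ([c] @ Delta n @ w)"
    using Meq_context[OF Meq_a_word_letter[OF c]] .
  also have "Meq n \<dots> ([c] @ w @ Delta n)"
    using Meq_append_left[OF Cons.IH[OF w]] .
  finally show ?case
    by simp
qed simp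

section \<open>Normal forms in \<open>\<langle>x, y | x\<^sup>n, y\<^sup>n\<^sup>+\<^sup>1\<rangle>\<close>\<close>

text \<open>Syllables \<open>(True, e) = x\<^sup>e\<close> and \<open>(False, e) = y\<^sup>e\<close> are listed from the right end of
  the word, so \<open>mult_syllable n t k\<close> is right multiplication by \<open>x\<^sup>k\<close> resp. \<open>y\<^sup>k\<close>.\<close>

definition factor_order :: "nat \<Rightarrow> bool \<Rightarrow> nat" where
  "factor_order n t = (if t then n else Suc n)"

fun head_split :: "bool \<Rightarrow> (bool \<times> nat) list \<Rightarrow> nat \<times> (bool \<times> nat) list" where
  "head_split t [] = (0, [])"
| "head_split t ((s, e) # L) = (if s = t then (e, L) else (0, (s, e) # L))"

definition cons_syllable :: "bool \<Rightarrow> nat \<Rightarrow> (bool \<times> nat) list \<Rightarrow> (bool \<times> nat) list" where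
  "cons_syllable t e L = (if e = 0 then L else (t, e) # L)"

definition mult_syllable :: "nat \<Rightarrow> bool \<Rightarrow> nat \<Rightarrow> (bool \<times> nat) list \<Rightarrow> (bool \<times> nat) list" where
  "mult_syllable n t k L =
    (case head_split t L of (e, L') \<Rightarrow> cons_syllable t ((e + k) mod factor_order n t) L')"

definition normal_form :: "nat \<Rightarrow> (bool \<times> nat) list \<Rightarrow> bool" where
  "normal_form n L \<longleftrightarrow>
    (\<forall>(t, e) \<in> set L. 0 < e \<and> e < factor_order n t) \<and> successively (\<lambda>x y. fst x \<noteq> fst y) L"

lemma normal_form_head_split:
  assumes "0 < n" "normal_form n L" "head_split t L = (e, L')"
  shows "e < factor_order n t" "normal_form n L'" "head_split t L' = (0, L')"
    "cons_syllable t e L' = L"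
proof -
  have "e < factor_order n t \<and> normal_form n L' \<and> head_split t L' = (0, L') \<and> cons_syllable t e L' = L"
  proof (cases L)
    case Nil
    then show ?thesis
      using assms by (simp add: factor_order_def normal_form_def cons_syllable_def)
  next
    case (Cons x L'')
    then show ?thesis
      using assms
      by (cases x; cases L'')
         (auto simp: factor_order_def normal_form_def cons_syllable_def split: if_splits)
  qed
  then show "e < factor_order n t" "normal_form n L'" "head_split t L' = (0, L')"
    "cons_syllable t e L' = L"
    by simp_all
qed

lemma head_split_cons_syllable:
  "head_split t L = (0, L) \<Longrightarrow> head_split t (cons_syllable t e L) = (e, L)"
  by (simp add: cons_syllable_def)

lemma normal_form_cons_syllable:
  assumes "normal_form n L" "head_split t L = (0, L)" "e < factor_order n t"
  shows "normal_form n (cons_syllable t e L)"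
  using assms by (cases L) (auto simp: normal_form_def cons_syllable_def split: if_splits)

lemma normal_form_mult_syllable:
  assumes "0 < n" "normal_form n L"
  shows "normal_form n (mult_syllable n t k L)"
proof -
  obtain e L' where h: "head_split t L = (e, L')"
    by fastforce
  have "0 < factor_order n t"
    using assms(1) by (simp add: factor_order_def)
  then show ?thesis
    using normal_form_head_split[OF assms h]
    by (simp add: mult_syllable_def h normal_form_cons_syllable)
qed

lemma mult_syllable_add:
  assumes "0 < n" "normal_form n L"
  shows "mult_syllable n t a (mult_syllable n t c L) = mult_syllable n t (a + c) L"
proof -
  obtain e L' where h: "head_split t L = (e, L')"
    by fastforce
  then have "head_split t L' = (0, L')"
    using normal_form_head_split[OF assms] by blast
  then show ?thesis
    by (simp add: mult_syllable_def h head_split_cons_syllable mod_add_right_eq add_ac)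
qed

lemma mult_syllable_factor_order:
  assumes "0 < n" "normal_form n L" "k mod factor_order n t = 0"
  shows "mult_syllable n t k L = L"
proof -
  obtain e L' where h: "head_split t L = (e, L')"
    by fastforce
  have "(e + k) mod factor_order n t = (e + k mod factor_order n t) mod factor_order n t"
    by (simp add: mod_add_right_eq)
  also have "\<dots> = e"
    using normal_form_head_split(1)[OF assms(1,2) h] assms(3) by simp
  finally have "(e + k) mod factor_order n t = e" .
  then show ?thesis
    using normal_form_head_split(4)[OF assms(1,2) h] by (simp add: mult_syllable_def h)
qed

lemma mult_syllable_cancel:
  assumes "0 < n" "normal_form n L" "normal_form n L'"
    and "mult_syllable n t k L = mult_syllable n t k L'"
  shows "L = L'"
proof -
  define m where "m = factor_order n t"
  have "0 < m"
    using assms(1) by (simp add: m_def factor_order_def)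
  have "(m - k mod m + k) mod m = (m - k mod m + k mod m) mod m"
    by (rule mod_add_right_eq[symmetric])
  also have "m - k mod m + k mod m = m"
    using mod_less_divisor[OF \<open>0 < m\<close>, of k] by linarith
  also have "m mod m = 0"
    by (rule mod_self)
  finally have inverse: "(m - k mod m + k) mod m = 0" .
  have undo: "mult_syllable n t (m - k mod m) (mult_syllable n t k M) = M"
    if "normal_form n M" for M
    using inverse unfolding mult_syllable_add[OF assms(1) that] m_def
    by (rule mult_syllable_factor_order[OF assms(1) that])
  have "L = mult_syllable n t (m - k mod m) (mult_syllable n t k L)"
    using undo[OF assms(2)] by simp
  also have "\<dots> = L'"
    using undo[OF assms(3)] assms(4) by simp
  finally show ?thesis .
qed

section \<open>Words acting trivially are powers of \<open>\<Delta>\<close>\<close>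

text \<open>The letter \<open>\<rho>\<^sub>c\<close> acts by right multiplication with \<open>x\<^sup>c y\<^sup>-\<^sup>c\<close>; so \<open>\<rho>\<^sub>n\<close> acts as \<open>y\<close>
  and \<open>\<Delta>\<close> trivially.\<close>

definition act_letter :: "nat \<Rightarrow> nat \<Rightarrow> (bool \<times> nat) list \<Rightarrow> (bool \<times> nat) list" where
  "act_letter n c L = mult_syllable n False (Suc n - c) (mult_syllable n True c L)"

definition act_word :: "nat \<Rightarrow> nat list \<Rightarrow> (bool \<times> nat) list \<Rightarrow> (bool \<times> nat) list" where
  "act_word n u L = fold (act_letter n) u L"

lemma act_word_Nil [simp]: "act_word n [] L = L"
  by (simp add: act_word_def)

lemma act_word_Cons [simp]: "act_word n (c # u) L = act_word n u (act_letter n c L)"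
  by (simp add: act_word_def)

lemma act_word_append: "act_word n (u @ v) L = act_word n v (act_word n u L)"
  by (simp add: act_word_def)

lemma normal_form_Nil [simp]: "normal_form n []"
  by (simp add: normal_form_def)

lemma normal_form_act_letter: "0 < n \<Longrightarrow> normal_form n L \<Longrightarrow> normal_form n (act_letter n c L)"
  by (simp add: act_letter_def normal_form_mult_syllable)

lemma normal_form_act_word: "0 < n \<Longrightarrow> normal_form n L \<Longrightarrow> normal_form n (act_word n u L)"
  by (induction u arbitrary: L) (simp_all add: normal_form_act_letter)

lemma act_letter_n: "0 < n \<Longrightarrow> normal_form n L \<Longrightarrow> act_letter n n L = mult_syllable n False 1 L"
  by (simp add: act_letter_def mult_syllable_factor_order factor_order_def)

lemma act_word_replicate_n:
  "0 < n \<Longrightarrow> normal_form n L \<Longrightarrow> act_word n (replicate k n) L = mult_syllable n False k L"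
proof (induction k arbitrary: L)
  case 0
  then show ?case
    by (simp add: mult_syllable_factor_order)
next
  case (Suc k)
  then show ?case
    by (simp add: act_letter_n normal_form_mult_syllable mult_syllable_add)
qed

lemma act_word_Delta: "0 < n \<Longrightarrow> normal_form n L \<Longrightarrow> act_word n (Delta n) L = L"
  unfolding Delta_eq_replicate
  by (simp only: act_word_replicate_n) (simp add: mult_syllable_factor_order factor_order_def)

lemma act_word_relation:
  assumes "0 < n" "1 \<le> i" "i < n" "normal_form n L"
  shows "act_word n [1, n, i] L = act_word n [Suc i, n] L"
proof -
  define L1 where "L1 = mult_syllable n True 1 L"
  have L1: "normal_form n L1"
    using assms by (simp add: L1_def normal_form_mult_syllable)
  have "act_word n [1, n, i] L = act_letter n i (act_letter n n (mult_syllable n False n L1))"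
    by (simp add: act_letter_def L1_def)
  also have "\<dots> = act_letter n i L1"
    using assms(1) L1
    by (simp add: act_letter_n normal_form_mult_syllable mult_syllable_add
        mult_syllable_factor_order factor_order_def)
  also have "\<dots> = mult_syllable n False (1 + (n - i)) (mult_syllable n True (Suc i) L)"
    using assms by (simp add: act_letter_def L1_def mult_syllable_add Suc_diff_le)
  also have "\<dots> = act_letter n n (mult_syllable n False (n - i) (mult_syllable n True (Suc i) L))"
    using assms by (simp add: act_letter_n normal_form_mult_syllable mult_syllable_add)
  also have "\<dots> = act_word n [Suc i, n] L"
    by (simp add: act_letter_def[of n "Suc i"])
  finally show ?thesis .
qed

lemma act_word_Meq:
  "Meq n u v \<Longrightarrow> 0 < n \<Longrightarrow> normal_form n L \<Longrightarrow> act_word n u L = act_word n v L"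
proof (induction arbitrary: L rule: Meq.induct)
  case (step l r u w)
  from step.hyps obtain i where "1 \<le> i" "i \<le> n - 1" "l = [1, n, i]" "r = [Suc i, n]"
    by (cases rule: Mrel.cases) auto
  moreover have "i < n"
    using \<open>1 \<le> i\<close> \<open>i \<le> n - 1\<close> by linarith
  ultimately show ?case
    using step.prems act_word_relation normal_form_act_word by (simp add: act_word_append)
qed simp_all

lemma act_word_cancel:
  "0 < n \<Longrightarrow> normal_form n L \<Longrightarrow> normal_form n L' \<Longrightarrow> act_word n u L = act_word n u L' \<Longrightarrow> L = L'"
proof (induction u arbitrary: L L')
  case (Cons c u)
  then have "act_letter n c L = act_letter n c L'"
    by (simp add: normal_form_act_letter)
  then show ?case
    using Cons.prems by (auto simp: act_letter_def normal_form_mult_syllable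
        dest!: mult_syllable_cancel[rotated 3])
qed simp

lemma sum_list_Meq: "Meq n u v \<Longrightarrow> sum_list u = sum_list v"
  by (induction rule: Meq.induct) (auto elim: Mrel.cases)

lemma Meq_reducible_factor:
  assumes "1 \<le> i" "i < n" "1 \<le> j" "j < n"
  obtains x k where "x \<in> {1..n}" "Meq n ([i] @ replicate i n @ [j]) ([x] @ replicate k n)"
proof -
  have start: "Meq n ([i] @ replicate i n @ [j]) (wpow [1, n] i @ [j])"
    using Meq_append_right[OF Meq_letter_wpow_n[of i n]] assms by (simp add: wpow_singleton)
  show thesis
  proof (cases "j + i \<le> n")
    case True
    then show thesis
      using that[of "j + i" i] Meq.trans[OF start Meq_wpow_1n_shift[of j i n]] assms
      by (simp add: wpow_singleton)
  next
    case False
    define s where "s = i - (n - j)"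
    have s: "1 \<le> s" "s \<le> n" "i = s + (n - j)"
      using False assms by (auto simp: s_def)
    have "wpow [1, n] i @ [j] = wpow [1, n] s @ (wpow [1, n] (n - j) @ [j])"
      by (simp add: s(3) wpow_add)
    also have "Meq n \<dots> (wpow [1, n] s @ ([j + (n - j)] @ wpow [n] (n - j)))"
      using assms by (intro Meq_append_left Meq_wpow_1n_shift) auto
    also have "\<dots> = wpow [1, n] s @ replicate (Suc (n - j)) n"
      using assms by (simp add: wpow_singleton)
    also have "Meq n \<dots> (([s] @ wpow [n] s) @ replicate (Suc (n - j)) n)"
      using Meq_append_right[OF Meq.sym[OF Meq_letter_wpow_n[OF s(1,2)]]] .
    also have "\<dots> = [s] @ replicate (s + Suc (n - j)) n"
      by (simp add: wpow_singleton replicate_app_Cons_same flip: replicate_add)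
    finally have "Meq n (wpow [1, n] i @ [j]) ([s] @ replicate (s + Suc (n - j)) n)" .
    with start s show thesis
      by (intro that[of s "s + Suc (n - j)"]) (auto intro: Meq.trans)
  qed
qed

definition has_Delta_factor :: "nat \<Rightarrow> nat list \<Rightarrow> bool" where
  "has_Delta_factor n u \<longleftrightarrow> (\<exists>p q. u = p @ Delta n @ q)"

definition has_reducible_factor :: "nat \<Rightarrow> nat list \<Rightarrow> bool" where
  "has_reducible_factor n u \<longleftrightarrow>
    (\<exists>p q i j. i \<in> {1..<n} \<and> j \<in> {1..<n} \<and> u = p @ [i] @ replicate i n @ [j] @ q)"

lemma has_Delta_factor_append: "has_Delta_factor n u \<Longrightarrow> has_Delta_factor n (u @ v)"
  unfolding has_Delta_factor_def by (metis append.assoc)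

lemma has_reducible_factor_append: "has_reducible_factor n u \<Longrightarrow> has_reducible_factor n (u @ v)"
  unfolding has_reducible_factor_def by (metis append.assoc)

text \<open>The last letter \<open>\<rho>\<^sub>i \<noteq> \<rho>\<^sub>n\<close> of \<open>u\<close>, followed by \<open>\<rho>\<^sub>n\<^sup>k\<close>, leaves the syllables
  \<open>x\<^sup>i y\<^sup>k\<^sup>-\<^sup>i\<close> at the end of the normal form \<open>F\<close> of \<open>u\<close>.\<close>

definition tail_shape :: "nat \<Rightarrow> nat list \<Rightarrow> (bool \<times> nat) list \<Rightarrow> bool" where
  "tail_shape n u F \<longleftrightarrow>
    (\<exists>k \<le> n. u = replicate k n \<and> F = cons_syllable False k []) \<or>
    (\<exists>p i k L. i \<in> {1..<n} \<and> k \<le> n \<and> u = p @ [i] @ replicate k n \<and>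
       F = cons_syllable False ((k + Suc n - i) mod Suc n) ((True, i) # L))"

lemma act_letter_push:
  assumes "1 \<le> c" "c < n" "head_split True F = (0, F)"
  shows "act_letter n c F = cons_syllable False ((0 + Suc n - c) mod Suc n) ((True, c) # F)"
  using assms by (simp add: act_letter_def mult_syllable_def factor_order_def cons_syllable_def)

lemma act_letter_n_cons_syllable:
  assumes "0 < n" "normal_form n (cons_syllable False e R)" "head_split False R = (0, R)"
  shows "act_letter n n (cons_syllable False e R) = cons_syllable False ((e + 1) mod Suc n) R"
  using assms
  by (simp add: act_letter_n mult_syllable_def head_split_cons_syllable factor_order_def)

lemma tail_shape_snoc_n:
  assumes "0 < n" "tail_shape n u F" "normal_form n F" "\<not> has_Delta_factor n (u @ [n])"
  shows "tail_shape n (u @ [n]) (act_letter n n F)"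
  using assms(2)[unfolded tail_shape_def]
proof (elim disjE exE conjE)
  fix k assume k: "k \<le> n" "u = replicate k n" "F = cons_syllable False k []"
  have "k \<noteq> n"
  proof
    assume "k = n"
    then have "u @ [n] = [] @ Delta n @ []"
      using k(2) by (simp add: Delta_eq_replicate replicate_append_same)
    then show False
      using assms(4) unfolding has_Delta_factor_def by blast
  qed
  then have "u @ [n] = replicate (Suc k) n \<and>
      act_letter n n F = cons_syllable False (Suc k) []"
    using assms(1,3) k by (simp add: act_letter_n_cons_syllable replicate_append_same)
  then show ?thesis
    unfolding tail_shape_def using k \<open>k \<noteq> n\<close> by (intro disjI1 exI[of _ "Suc k"]) simp
next
  fix p i k L
  assume k: "i \<in> {1..<n}" "k \<le> n" "u = p @ [i] @ replicate k n"
    and F: "F = cons_syllable False ((k + Suc n - i) mod Suc n) ((True, i) # L)"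
  have "k \<noteq> n"
  proof
    assume "k = n"
    then have "u @ [n] = (p @ [i]) @ Delta n @ []"
      using k(3) by (simp add: Delta_eq_replicate replicate_append_same)
    then show False
      using assms(4) unfolding has_Delta_factor_def by blast
  qed
  have "((k + Suc n - i) mod Suc n + 1) mod Suc n = (Suc k + Suc n - i) mod Suc n"
    using k(1) by (simp add: mod_Suc_eq Suc_diff_le)
  then have "act_letter n n F = cons_syllable False ((Suc k + Suc n - i) mod Suc n) ((True, i) # L)"
    using assms(1,3) F by (simp add: act_letter_n_cons_syllable)
  moreover have "u @ [n] = p @ [i] @ replicate (Suc k) n"
    using k(3) by (simp add: replicate_append_same)
  ultimately show ?thesis
    unfolding tail_shape_def using k \<open>k \<noteq> n\<close>
    by (intro disjI2 exI[of _ p] exI[of _ i] exI[of _ "Suc k"] exI[of _ L]) simp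
qed

lemma tail_shape_snoc_letter:
  assumes "tail_shape n u F" "1 \<le> c" "c < n" "\<not> has_reducible_factor n (u @ [c])"
  shows "tail_shape n (u @ [c]) (act_letter n c F)"
proof -
  have "head_split True F = (0, F)"
    using assms(1) unfolding tail_shape_def
  proof (elim disjE exE conjE)
    fix p i k L
    assume k: "i \<in> {1..<n}" "k \<le> n" "u = p @ [i] @ replicate k n"
      and F: "F = cons_syllable False ((k + Suc n - i) mod Suc n) ((True, i) # L)"
    have "k \<noteq> i"
      using assms(2,3,4) k unfolding has_reducible_factor_def by fastforce
    then have "(k + Suc n - i) mod Suc n \<noteq> 0"
      using k(1,2) by (cases "i \<le> k") (simp_all add: le_mod_geq)
    then show ?thesis
      using F by (simp add: cons_syllable_def)
  qed (auto simp: cons_syllable_def)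
  then have "act_letter n c F = cons_syllable False ((0 + Suc n - c) mod Suc n) ((True, c) # F)"
    by (rule act_letter_push[OF assms(2,3)])
  then show ?thesis
    using assms(2,3) unfolding tail_shape_def
    by (intro disjI2 exI[of _ u] exI[of _ c] exI[of _ 0] exI[of _ F]) simp
qed

lemma tail_shape_act_word:
  assumes "0 < n" "u \<in> words n" "\<not> has_Delta_factor n u" "\<not> has_reducible_factor n u"
  shows "tail_shape n u (act_word n u [])"
  using assms(2-4)
proof (induction u rule: rev_induct)
  case Nil
  show ?case
    unfolding tail_shape_def by (simp add: cons_syllable_def)
next
  case (snoc c u)
  have "u \<in> words n" "\<not> has_Delta_factor n u" "\<not> has_reducible_factor n u"
    using snoc.prems has_Delta_factor_append has_reducible_factor_append
    by (auto simp: words_def)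
  then have "tail_shape n u (act_word n u [])"
    by (rule snoc.IH)
  moreover have "1 \<le> c" "c \<le> n"
    using snoc.prems(1) by (auto simp: words_def)
  ultimately show ?case
    using tail_shape_snoc_n[OF assms(1)] tail_shape_snoc_letter normal_form_act_word[OF assms(1)]
      snoc.prems(2,3) by (cases "c = n") (simp_all add: act_word_append)
qed

lemma irreducible_word_acts_nontrivially:
  assumes "0 < n" "u \<in> words n" "\<not> has_Delta_factor n u" "\<not> has_reducible_factor n u"
    and "act_word n u [] = []"
  shows "u = []"
  using tail_shape_act_word[OF assms(1-4)] assms(5)
  by (auto simp: tail_shape_def cons_syllable_def split: if_splits)

lemma reducible_factor_rewrite:
  assumes "u \<in> words n" "has_reducible_factor n u"
  obtains u' where "Meq n u u'" "u' \<in> words n"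
    "length (filter (\<lambda>x. x \<noteq> n) u') < length (filter (\<lambda>x. x \<noteq> n) u)"
proof -
  obtain p q i j where ij: "i \<in> {1..<n}" "j \<in> {1..<n}"
    and u: "u = p @ [i] @ replicate i n @ [j] @ q"
    using assms(2) unfolding has_reducible_factor_def by blast
  obtain x k where x: "x \<in> {1..n}"
    and xk: "Meq n ([i] @ replicate i n @ [j]) ([x] @ replicate k n)"
    using Meq_reducible_factor[of i n j] ij by auto
  show thesis
  proof (rule that)
    show "Meq n u (p @ [x] @ replicate k n @ q)"
      using Meq_context[OF xk, of p q] by (simp add: u)
    show "p @ [x] @ replicate k n @ q \<in> words n"
      using assms(1) x by (auto simp: u words_def)
    show "length (filter (\<lambda>x. x \<noteq> n) (p @ [x] @ replicate k n @ q))
        < length (filter (\<lambda>x. x \<noteq> n) u)"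
      using ij by (simp add: u)
  qed
qed

lemma sum_list_wpow: "sum_list (wpow w m) = m * sum_list w"
  by (induction m) (simp_all add: wpow_Suc)

lemma Meq_Delta_power_if_act_word_Nil:
  assumes "0 < n" "u \<in> words n" "act_word n u [] = []"
  shows "\<exists>m. Meq n u (wpow (Delta n) m)"
  using assms(2,3)
proof (induction "sum_list u + length (filter (\<lambda>x. x \<noteq> n) u)" arbitrary: u rule: less_induct)
  case less
  consider "has_Delta_factor n u" | "has_reducible_factor n u"
    | "\<not> has_Delta_factor n u" "\<not> has_reducible_factor n u"
    by blast
  then show ?case
  proof cases
    case 1
    then obtain p q where u: "u = p @ Delta n @ q"
      unfolding has_Delta_factor_def by blast
    have "act_word n (p @ q) [] = []"
      using less.prems(2) assms(1) normal_form_act_word[OF assms(1)]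
      by (simp add: u act_word_append act_word_Delta)
    moreover have "p @ q \<in> words n"
      using less.prems(1) by (simp add: u words_def)
    moreover have "sum_list (p @ q) < sum_list u"
      using assms(1) by (simp add: u Delta_eq_replicate)
    ultimately obtain m where m: "Meq n (p @ q) (wpow (Delta n) m)"
      using less.hyps[of "p @ q"] by (auto simp: u)
    have "Meq n u (Delta n @ p @ q)"
      using Meq_append_right[OF Meq.sym[OF Meq_Delta_central], of p n q] less.prems(1)
      by (simp add: u words_def)
    also have "Meq n \<dots> (wpow (Delta n) (Suc m))"
      using Meq_append_left[OF m] by (simp add: wpow_Suc)
    finally show ?thesis ..
  next
    case 2
    with less.prems(1) obtain u' where u': "Meq n u u'" "u' \<in> words n"
      and shorter: "length (filter (\<lambda>x. x \<noteq> n) u') < length (filter (\<lambda>x. x \<noteq> n) u)"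
      by (rule reducible_factor_rewrite)
    have "act_word n u' [] = []"
      using act_word_Meq[OF u'(1) assms(1)] less.prems(2) by simp
    moreover have "sum_list u' = sum_list u"
      using sum_list_Meq[OF u'(1)] by simp
    ultimately obtain m where "Meq n u' (wpow (Delta n) m)"
      using less.hyps[of u'] u'(2) shorter by fastforce
    then show ?thesis
      using Meq.trans[OF u'(1)] by blast
  next
    case 3
    then have "u = []"
      using irreducible_word_acts_nontrivially assms(1) less.prems by blast
    then show ?thesis
      by (intro exI[of _ 0]) simp
  qed
qed

lemma Meq_Delta_swap:
  assumes "1 \<le> n" "a \<in> words n" "b \<in> words n" "Meq n (a @ b) (Delta n)"
  shows "Meq n (b @ a) (Delta n)"
proof -
  have n: "0 < n"
    using assms(1) by simp
  have "act_word n b (act_word n (b @ a) []) = act_word n (a @ b) (act_word n b [])"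
    by (simp add: act_word_append)
  also have "\<dots> = act_word n b []"
    using act_word_Meq[OF assms(4) n] act_word_Delta[OF n] normal_form_act_word[OF n] by simp
  finally have "act_word n (b @ a) [] = []"
    using act_word_cancel[OF n] normal_form_act_word[OF n] by simp
  moreover have "b @ a \<in> words n"
    using assms(2,3) by (simp add: words_def)
  ultimately obtain m where m: "Meq n (b @ a) (wpow (Delta n) m)"
    using Meq_Delta_power_if_act_word_Nil[OF n] by blast
  have "m * sum_list (Delta n) = 1 * sum_list (Delta n)"
    using sum_list_Meq[OF m] sum_list_Meq[OF assms(4)] by (simp add: sum_list_wpow add.commute)
  then have "m = 1"
    using n by (simp add: Delta_eq_replicate)
  then show ?thesis
    using m by (simp add: wpow_Suc)
qed

theorem proposition4p14:
  fixes n :: nat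
  assumes "n \<ge> 1"
  shows "Meq n ([1] @ wpow [n, 1] (n - 1)) (wpow [n] n)
    \<and> Meq n (Delta n) (wpow [1, n] n)
    \<and> Meq n (Delta n) (wpow [n, 1] n)
    \<and> (\<forall>i. 1 \<le> i \<and> i \<le> n \<longrightarrow>
          Meq n ([i] @ a_word n i) (Delta n) \<and> Meq n (a_word n i @ [i]) (Delta n))
    \<and> (\<forall>i. 1 \<le> i \<and> i \<le> n \<longrightarrow>
          (\<exists>c \<in> words n. Meq n ([i] @ c) (Delta n))
        \<and> (\<exists>c \<in> words n. Meq n (c @ [i]) (Delta n)))
    \<and> (\<forall>w \<in> words n. Meq n (Delta n @ w) (w @ Delta n))
    \<and> (\<forall>a \<in> words n. \<forall>b \<in> words n.
          Meq n (a @ b) (Delta n) \<longrightarrow> Meq n (b @ a) (Delta n))"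
proof (intro conjI allI impI ballI)
  show "Meq n ([1] @ wpow [n, 1] (n - 1)) (wpow [n] n)"
    using assms by (rule Meq_rho1_wpow_n1)
  show "Meq n (Delta n) (wpow [1, n] n)"
    using assms by (rule Meq_Delta_wpow_1n)
  show "Meq n (Delta n) (wpow [n, 1] n)"
    using assms by (rule Meq_Delta_wpow_n1)
  fix i
  assume "1 \<le> i \<and> i \<le> n"
  then show "Meq n ([i] @ a_word n i) (Delta n)" "Meq n (a_word n i @ [i]) (Delta n)"
    and "\<exists>c \<in> words n. Meq n ([i] @ c) (Delta n)" "\<exists>c \<in> words n. Meq n (c @ [i]) (Delta n)"
    using Meq_letter_a_word Meq_a_word_letter a_word_in_words assms by blast+
next
  fix w
  assume "w \<in> words n"
  then show "Meq n (Delta n @ w) (w @ Delta n)"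
    by (rule Meq_Delta_central)
next
  fix a b
  assume "a \<in> words n" "b \<in> words n" "Meq n (a @ b) (Delta n)"
  then show "Meq n (b @ a) (Delta n)"
    using Meq_Delta_swap assms by blast
qed

end
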